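(* Let $w,v$ be fixed complex numbers with $\mathrm{Re}(w)\leq1$ and $w\neq1$. Then for every integer $R\geq1$, as real $n\to\infty$, \[ S_n(w;v)=U_0(w;v)+\frac{U_1(w;v)}{n}+\cdots+\frac{U_{R-1}(w;v)}{n^{R-1}}+O\!\left(\frac{1}{n^R}\right), \] with an implied constant depending only on $w$, $v$ and $R$.
   Context: For real $n>0$ with $\mathrm{Re}(n+v)>-1$, $S_n(w;v)=1+nw\int_0^1 e^{nw(1-z)}z^{n+v}\,dz$ (for integers $n\geq1$, $n+v\geq0$, $w\neq0$ it satisfies $e^{nw}=\sum_{j=0}^{n+v-1}\frac{(nw)^j}{j!}+\frac{(nw)^{n+v}}{(n+v)!}S_n(w;v)$). De Moivre polynomial $\mathcal{A}_{n,k}(a_1,a_2,\dots)$: coefficient of $x^n$ in $(a_1x+a_2x^2+\cdots)^k$. $\binom{v}{j}=v(v-1)\cdots(v-j+1)/j!$; $\delta_{r,0}$ Kronecker delta. $U_r(w;v)=\delta_{r,0}-\sum_{m=0}^{r}(-1)^m\binom{v}{r-m}\sum_{k=0}^{m}\frac{w}{(w-1)^{r+k+1}}\frac{(r+k)!}{k!}\mathcal{A}_{m,k}(\frac12,\frac13,\frac14,\dots)$. *)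

theory Defs
  imports "HOL-Analysis.Analysis" "HOL-Computational_Algebra.Formal_Power_Series"
    "HOL-Library.Landau_Symbols"
begin

definition S_fun :: "real \<Rightarrow> complex \<Rightarrow> complex \<Rightarrow> complex" where
  "S_fun n w v = 1 + of_real n * w *
     integral {0..1} (\<lambda>z::real. exp (of_real n * w * (1 - of_real z)) * (of_real z) powr (of_real n + v))"

definition demoivre :: "(nat \<Rightarrow> 'a::comm_ring_1) \<Rightarrow> nat \<Rightarrow> nat \<Rightarrow> 'a" where
  "demoivre a m k = fps_nth ((Abs_fps (\<lambda>j. if j = 0 then 0 else a j)) ^ k) m"

definition U_fun :: "nat \<Rightarrow> complex \<Rightarrow> complex \<Rightarrow> complex" where
  "U_fun r w v = (if r = 0 then 1 else 0) -
     (\<Sum>m=0..r. (-1)^m * (v gchoose (r - m)) *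
        (\<Sum>k=0..m. w / (w - 1) ^ (r + k + 1) * (of_nat (fact (r + k)) / of_nat (fact k))
                    * demoivre (\<lambda>j. 1 / (of_nat j + 1)) m k))"

end

(*
  Integration by parts.  Let K_k(n) be the integral over [0,1] of
  e^(nw(1-z)) z^(n+v) P_k(1-z) / (1-wz)^(2k), where P_0 = 1 and P_(k+1) arises from P_k by a
  first-order differential recursion.  Differentiating the boundary term
  e^(nw(1-z)) z^(n+v+1) P_k(1-z) / (1-wz)^(2k+1) gives n K_k + K_(k+1) = a_k, with
  a_k = P_k(0) / (1-w)^(2k+1).  As S_n = 1 + n w K_0, iterating yields
    S_n = 1 + w (sum of (-1)^k a_k / n^k over k < R) + (-1)^R w (n K_R) / n^R,
  and n K_R = a_R - K_(R+1) stays bounded: for Re w <= 1 the kernel e^(nw(1-z)) z^(n+v) is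
  bounded by e^|Re v| and 1 - wz does not vanish on [0,1].

  It remains to show U_r = [r = 0] + (-1)^r w a_r, an identity of formal power series in
  x = 1 - z.  Writing ln z = -x - A(x), the definition of U_r says U_r = [r = 0] + w L_r((1-x)^v),
  where L_r(h) is the coefficient of n^(-r) in the formal Laplace expansion of
  n times the integral of e^(-n(1-w)x - nA(x)) h(x).  Integration by parts
  reappears formally as L_(r+1)(h) = L_r(D h) with D h = (h (1-x) / (1-w+wx))', and D maps
  (1-x)^v P(x) (1-w+wx)^(-m) to -(1-x)^v (T_m P)(x) (1-w+wx)^(-m-2), where T_m is the step of the
  recursion for P_k.  Hence L_r((1-x)^v) = (D^r (1-x)^v)(0) / (1-w) = (-1)^r a_r.
*)

theory Submission
  imports Defs "HOL-Computational_Algebra.Polynomial_FPS"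
begin

unbundle no vec_syntax
notation fps_nth (infixl "$" 75)

section \<open>Formal power series\<close>

lemma fps_power_mult_nth_eq_0:
  fixes f h :: "'a::idom fps"
  assumes "\<And>i. i < d \<Longrightarrow> f $ i = 0" and "j < d * k"
  shows "(f ^ k * h) $ j = 0"
proof (cases "f = 0")
  case True
  with assms(2) show ?thesis by (cases k) auto
next
  case False
  then have "d \<le> subdegree f" by (rule subdegree_geI) (rule assms(1))
  then have "d * k \<le> subdegree (f ^ k)"
    by (simp add: mult.commute[of k] mult_le_mono1)
  with assms(2) have "j < subdegree (f ^ k) + subdegree h"
    by linarith
  then show ?thesis by (rule fps_mult_nth_eq0)
qed

lemma fps_power_mult_deriv_nth:
  fixes f u :: "'a::comm_ring_1 fps"
  shows "(f ^ Suc k * fps_deriv u) $ n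
    = of_nat (n + 1) * (f ^ Suc k * u) $ (n + 1) - of_nat (Suc k) * (f ^ k * (fps_deriv f * u)) $ n"
proof -
  have "fps_deriv (f ^ Suc k) = fps_const (of_nat (Suc k)) * fps_deriv f * f ^ k"
    using fps_deriv_power[of f "Suc k"] by simp
  then have "f ^ Suc k * fps_deriv u
      = fps_deriv (f ^ Suc k * u) - fps_const (of_nat (Suc k)) * (f ^ k * (fps_deriv f * u))"
    by (simp only: fps_deriv_mult) (simp add: algebra_simps)
  then show ?thesis
    by (simp only: fps_sub_nth fps_deriv_nth fps_mult_left_const_nth)
qed

definition demoivre_fps :: "'a::field_char_0 fps" where
  "demoivre_fps = Abs_fps (\<lambda>j. if j = 0 then 0 else 1 / (of_nat j + 1))"

lemma demoivre_eq_demoivre_fps_power_nth: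
  "demoivre (\<lambda>j. 1 / (of_nat j + 1)) m k = (demoivre_fps ^ k) $ m"
  by (simp add: demoivre_def demoivre_fps_def)

lemma demoivre_fps_power_nth_eq_0: "m < k \<Longrightarrow> (demoivre_fps ^ k) $ m = 0"
  using fps_power_mult_nth_eq_0[of 1 demoivre_fps m k 1] by (simp add: demoivre_fps_def)

(* -ln (1 - x) - x *)
definition log_tail_fps :: "'a::field_char_0 fps" where
  "log_tail_fps = fps_X * demoivre_fps"

lemma log_tail_fps_power_mult_nth_eq_0: "j < 2 * k \<Longrightarrow> (log_tail_fps ^ k * h) $ j = 0"
  by (rule fps_power_mult_nth_eq_0[where d = 2])
    (auto simp: log_tail_fps_def demoivre_fps_def less_2_cases_iff)

lemma log_tail_fps_power_mult_nth:
  "(log_tail_fps ^ k * h) $ (m + k) = (demoivre_fps ^ k * h) $ m"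
  by (simp add: log_tail_fps_def power_mult_distrib mult.assoc fps_X_power_mult_nth)

lemma fps_deriv_log_tail_fps: "fps_deriv log_tail_fps = fps_X * Abs_fps (\<lambda>_. 1)"
proof (rule fps_ext)
  fix n
  have "(1 + of_nat n :: 'a) \<noteq> 0"
    using of_nat_neq_0[of n] by simp
  then show "fps_deriv log_tail_fps $ n = (fps_X * Abs_fps (\<lambda>_. 1 :: 'a)) $ n"
    by (simp add: log_tail_fps_def demoivre_fps_def field_simps)
qed

lemma fps_deriv_log_tail_fps_mult: "fps_deriv log_tail_fps * (1 - fps_X) = fps_X"
proof -
  have "Abs_fps (\<lambda>_. 1) * (1 - fps_X) = (1 :: 'a fps)"
    by (rule fps_ext) (simp add: algebra_simps)
  then show ?thesis by (simp add: fps_deriv_log_tail_fps mult.assoc)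
qed

(* (1 - x) ^ v *)
definition fps_binomial_minus :: "'a::field_char_0 \<Rightarrow> 'a fps" where
  "fps_binomial_minus v = Abs_fps (\<lambda>i. (-1) ^ i * (v gchoose i))"

lemma fps_deriv_fps_binomial_minus:
  "fps_deriv (fps_binomial_minus v) * (1 - fps_X) = - fps_const v * fps_binomial_minus v"
proof (rule fps_ext)
  fix i
  have "(fps_deriv (fps_binomial_minus v) * (1 - fps_X)) $ i
      = (-1) ^ Suc i * (of_nat (Suc i) * (v gchoose Suc i) + of_nat i * (v gchoose i))"
    by (cases i) (simp_all add: fps_binomial_minus_def algebra_simps)
  also have "\<dots> = (- fps_const v * fps_binomial_minus v) $ i"
    by (simp add: fps_binomial_minus_def gbinomial_mult_1)
  finally show "(fps_deriv (fps_binomial_minus v) * (1 - fps_X)) $ i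
      = (- fps_const v * fps_binomial_minus v) $ i" .
qed

lemma fps_deriv_fps_binomial_minus_mult:
  "fps_deriv (fps_binomial_minus v * (1 - fps_X)) = - fps_const (v + 1) * fps_binomial_minus v"
  using fps_deriv_fps_binomial_minus[of v]
  by (simp add: fps_deriv_mult algebra_simps fps_const_add[symmetric] del: fps_const_add)

section \<open>Laplace coefficients\<close>

(* laplace_coeff w r h is the coefficient of n^(-r) in n times the integral over x > 0 of
   e^(-n(1-w)x) e^(-n log_tail_fps(x)) h(x), after expanding e^(-n log_tail_fps) and using
   the integral of x^j e^(-n(1-w)x) = j! / (n(1-w))^(j+1).  Terms with k > r vanish because
   log_tail_fps ^ k has order 2k. *)
definition laplace_term :: "'a::field_char_0 \<Rightarrow> nat \<Rightarrow> 'a fps \<Rightarrow> nat \<Rightarrow> 'a" where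
  "laplace_term w r h k =
     (-1) ^ k * fact (r + k) / fact k * (log_tail_fps ^ k * h) $ (r + k) / (1 - w) ^ (r + k + 1)"

definition laplace_coeff :: "'a::field_char_0 \<Rightarrow> nat \<Rightarrow> 'a fps \<Rightarrow> 'a" where
  "laplace_coeff w r h = (\<Sum>k\<le>r. laplace_term w r h k)"

lemma laplace_term_eq_0: "r < k \<Longrightarrow> laplace_term w r h k = 0"
  by (simp add: laplace_term_def log_tail_fps_power_mult_nth_eq_0)

lemma laplace_coeff_conv_sum: "r \<le> N \<Longrightarrow> laplace_coeff w r h = (\<Sum>k\<le>N. laplace_term w r h k)"
  unfolding laplace_coeff_def
  by (rule sum.mono_neutral_left) (auto simp: laplace_term_eq_0)

lemma laplace_coeff_add: "laplace_coeff w r (g + h) = laplace_coeff w r g + laplace_coeff w r h"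
  by (simp add: laplace_coeff_def laplace_term_def distrib_left add_divide_distrib sum.distrib)

lemma laplace_coeff_const_mult: "laplace_coeff w r (fps_const c * h) = c * laplace_coeff w r h"
proof -
  have "laplace_term w r (fps_const c * h) k = c * laplace_term w r h k" for k
  proof -
    have eq: "log_tail_fps ^ k * (fps_const c * h) = fps_const c * (log_tail_fps ^ k * h)"
      by (simp only: mult.left_commute)
    show ?thesis unfolding laplace_term_def eq fps_mult_left_const_nth by (simp add: mult_ac)
  qed
  then show ?thesis by (simp add: laplace_coeff_def sum_distrib_left)
qed

lemma laplace_term_fps_deriv_0:
  assumes "w \<noteq> 1"
  shows "laplace_term w r (fps_deriv u) 0 = (1 - w) * laplace_term w (Suc r) u 0"
proof -
  obtain y where y: "y = 1 - w" "y \<noteq> 0" using assms by simp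
  then show ?thesis by (simp add: laplace_term_def y(1)[symmetric] field_simps del: of_nat_Suc)
qed

lemma laplace_term_fps_deriv_Suc:
  assumes "w \<noteq> 1"
  shows "laplace_term w r (fps_deriv u) (Suc k)
    = (1 - w) * laplace_term w (Suc r) u (Suc k)
      + laplace_term w (Suc r) (fps_deriv log_tail_fps * u) k"
proof -
  obtain y where y: "y = 1 - w" "y \<noteq> 0" using assms by simp
  define n where "n = r + Suc k"
  define a where "a = (log_tail_fps ^ Suc k * u) $ (n + 1)"
  define b where "b = (log_tail_fps ^ k * (fps_deriv log_tail_fps * u)) $ n"
  have "laplace_term w r (fps_deriv u) (Suc k)
      = (-1) ^ Suc k * fact n / fact (Suc k) * (of_nat (n + 1) * a - of_nat (Suc k) * b)
        / y ^ (n + 1)"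
    unfolding laplace_term_def fps_power_mult_deriv_nth n_def[symmetric] a_def b_def y(1) ..
  also have "\<dots> = y * ((-1) ^ Suc k * fact (n + 1) / fact (Suc k) * a / y ^ (n + 2))
      + (-1) ^ k * fact n / fact k * b / y ^ (n + 1)"
  proof -
    have alg: "- s * F / (c * K) * (d * a - c * b) / Y
        = y * (- s * (d * F) / (c * K) * a / (y * Y)) + s * F / K * b / Y"
      if "c \<noteq> 0" "K \<noteq> 0" "Y \<noteq> 0" for s F K Y c d :: 'a
      using that y(2) by (simp add: field_simps)
    have "(-1) ^ Suc k = - ((-1) ^ k :: 'a)"
      and "fact (Suc k) = (of_nat (Suc k) * fact k :: 'a)"
      and "fact (n + 1) = (of_nat (n + 1) * fact n :: 'a)"
      and "y ^ (n + 2) = y * y ^ (n + 1)"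
      by (simp_all del: of_nat_Suc)
    then show ?thesis
      using y(2) by (simp only:) (rule alg; simp del: of_nat_Suc)
  qed
  also have "\<dots> = (1 - w) * laplace_term w (Suc r) u (Suc k)
      + laplace_term w (Suc r) (fps_deriv log_tail_fps * u) k"
    unfolding laplace_term_def a_def b_def n_def y(1) by (simp add: add_ac)
  finally show ?thesis .
qed

lemma laplace_coeff_fps_deriv:
  assumes "w \<noteq> 1"
  shows "laplace_coeff w r (fps_deriv u)
    = laplace_coeff w (Suc r) ((fps_const (1 - w) + fps_deriv log_tail_fps) * u)"
proof -
  define v where "v = fps_deriv log_tail_fps * u"
  have "laplace_term w (Suc r) v (Suc r) = 0"
  proof -
    (* fps_deriv log_tail_fps = x / (1 - x) raises the order by one *)
    have eq: "log_tail_fps ^ Suc r * v = fps_X * (log_tail_fps ^ Suc r * (Abs_fps (\<lambda>_. 1) * u))"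
      by (simp add: v_def fps_deriv_log_tail_fps mult_ac del: power_Suc)
    have "(log_tail_fps ^ Suc r * v) $ (Suc r + Suc r)
        = (log_tail_fps ^ Suc r * (Abs_fps (\<lambda>_. 1) * u)) $ (Suc r + r)"
      unfolding eq fps_X_mult_nth by simp
    also have "\<dots> = 0" by (rule log_tail_fps_power_mult_nth_eq_0) simp
    finally show ?thesis by (simp add: laplace_term_def)
  qed
  then have v: "laplace_coeff w (Suc r) v = (\<Sum>k\<le>r. laplace_term w (Suc r) v k)"
    by (simp add: laplace_coeff_def)
  have "laplace_coeff w r (fps_deriv u) = (\<Sum>k\<le>Suc r. laplace_term w r (fps_deriv u) k)"
    by (rule laplace_coeff_conv_sum) simp
  also have "\<dots> = laplace_term w r (fps_deriv u) 0 + (\<Sum>k\<le>r. laplace_term w r (fps_deriv u) (Suc k))"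
    by (rule sum.atMost_Suc_shift)
  also have "\<dots> = (1 - w) * (laplace_term w (Suc r) u 0 + (\<Sum>k\<le>r. laplace_term w (Suc r) u (Suc k)))
      + (\<Sum>k\<le>r. laplace_term w (Suc r) v k)"
    by (simp only: laplace_term_fps_deriv_0[OF assms] laplace_term_fps_deriv_Suc[OF assms]
        v_def[symmetric] sum.distrib sum_distrib_left distrib_left add.assoc)
  also have "\<dots> = (1 - w) * laplace_coeff w (Suc r) u + laplace_coeff w (Suc r) v"
    unfolding v laplace_coeff_def[of w "Suc r" u]
      sum.atMost_Suc_shift[of "laplace_term w (Suc r) u"] ..
  also have "\<dots> = laplace_coeff w (Suc r) ((fps_const (1 - w) + fps_deriv log_tail_fps) * u)"
    by (simp add: v_def distrib_right laplace_coeff_add laplace_coeff_const_mult)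
  finally show ?thesis .
qed

(* 1 - w + w x, that is 1 - w z for z = 1 - x *)
definition denom_poly :: "'a::comm_ring_1 \<Rightarrow> 'a poly" where
  "denom_poly w = [:1 - w, w:]"

lemma fps_of_poly_denom_poly: "fps_of_poly (denom_poly w) = fps_const (1 - w) + fps_const w * fps_X"
  by (simp add: denom_poly_def fps_of_poly_pCons mult.commute)

lemma fps_of_poly_denom_poly_mult_inverse:
  fixes w :: "'a::field"
  shows "w \<noteq> 1 \<Longrightarrow> fps_of_poly (denom_poly w) * inverse (fps_of_poly (denom_poly w)) = 1"
  by (rule inverse_mult_eq_1') (simp add: fps_of_poly_denom_poly)

definition laplace_reduce :: "'a::field_char_0 \<Rightarrow> 'a fps \<Rightarrow> 'a fps" where
  "laplace_reduce w h = fps_deriv (h * (1 - fps_X) * inverse (fps_of_poly (denom_poly w)))"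

lemma laplace_coeff_Suc:
  assumes "w \<noteq> 1"
  shows "laplace_coeff w (Suc r) h = laplace_coeff w r (laplace_reduce w h)"
proof -
  define L where "L = fps_of_poly (denom_poly w)"
  define \<Psi> where "\<Psi> = fps_const (1 - w) + fps_deriv log_tail_fps"
  have \<Psi>: "\<Psi> * (1 - fps_X) = L"
    using fps_deriv_log_tail_fps_mult
    by (simp add: \<Psi>_def L_def fps_of_poly_denom_poly algebra_simps fps_const_sub[symmetric]
        del: fps_const_sub)
  have L: "L * inverse L = 1"
    using fps_of_poly_denom_poly_mult_inverse[OF assms] by (simp add: L_def)
  have "\<Psi> * (h * (1 - fps_X) * inverse L) = h * (\<Psi> * (1 - fps_X) * inverse L)"
    by (simp only: mult_ac)
  also have "\<dots> = h"
    by (simp only: \<Psi> L mult_1_right)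
  finally have eq: "\<Psi> * (h * (1 - fps_X) * inverse L) = h" .
  show ?thesis
    unfolding laplace_reduce_def laplace_coeff_fps_deriv[OF assms] L_def[symmetric]
      \<Psi>_def[symmetric] eq ..
qed

lemma laplace_coeff_eq_laplace_reduce_funpow:
  assumes "w \<noteq> 1"
  shows "laplace_coeff w r h = (laplace_reduce w ^^ r) h $ 0 / (1 - w)"
proof (induction r arbitrary: h)
  case 0
  then show ?case by (simp add: laplace_coeff_def laplace_term_def)
next
  case (Suc r)
  then show ?case by (simp add: laplace_coeff_Suc[OF assms] funpow_Suc_right del: funpow.simps)
qed

definition num_step :: "'a::idom \<Rightarrow> 'a \<Rightarrow> nat \<Rightarrow> 'a poly \<Rightarrow> 'a poly" where
  "num_step w v m p = smult (v + 1) (p * denom_poly w)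
     - [:1, -1:] * (pderiv p * denom_poly w - smult (of_nat (Suc m) * w) p)"

primrec num_poly :: "'a::idom \<Rightarrow> 'a \<Rightarrow> nat \<Rightarrow> 'a poly" where
  "num_poly w v 0 = 1"
| "num_poly w v (Suc k) = num_step w v (2 * k) (num_poly w v k)"

lemma fps_deriv_inverse_denom_power:
  fixes w :: "'a::field"
  assumes "w \<noteq> 1"
  defines "I \<equiv> inverse (fps_of_poly (denom_poly w))"
  shows "fps_deriv (I ^ Suc m) = - fps_const (of_nat (Suc m) * w) * I ^ (m + 2)"
proof -
  have "fps_deriv I = - fps_const w * I\<^sup>2"
    using assms(1) unfolding I_def by (simp add: fps_inverse_deriv fps_of_poly_denom_poly)
  moreover have "fps_deriv (I ^ Suc m) = fps_const (of_nat (Suc m)) * fps_deriv I * I ^ m"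
    by (simp only: fps_deriv_power diff_Suc_1)
  ultimately show ?thesis
    by (simp add: power_add power2_eq_square algebra_simps)
qed

lemma fps_of_poly_num_step:
  "fps_of_poly (num_step w v m p) = fps_const (v + 1) * fps_of_poly p * fps_of_poly (denom_poly w)
     - (1 - fps_X) * (fps_deriv (fps_of_poly p) * fps_of_poly (denom_poly w)
       - fps_const (of_nat (Suc m) * w) * fps_of_poly p)"
proof -
  have "fps_of_poly [:1, -1:] = (1 - fps_X :: 'a fps)"
    by (simp add: fps_of_poly_pCons)
  then show ?thesis
    unfolding num_step_def fps_of_poly_diff fps_of_poly_mult fps_of_poly_smult fps_of_poly_pderiv
    by (simp only: mult.assoc)
qed

lemma laplace_reduce_fps_binomial_minus_mult:
  assumes w: "w \<noteq> 1"
  defines "I \<equiv> inverse (fps_of_poly (denom_poly w))"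
  shows "laplace_reduce w (fps_binomial_minus v * fps_of_poly p * I ^ m)
    = - (fps_binomial_minus v * fps_of_poly (num_step w v m p) * I ^ (m + 2))"
proof -
  define G where "G = fps_binomial_minus v"
  define P where "P = fps_of_poly p"
  define L where "L = fps_of_poly (denom_poly w)"
  define J where "J = I ^ (m + 2)"
  define c where "c = fps_const (v + 1)"
  define d where "d = fps_const (of_nat (Suc m) * w)"
  have "L * I = 1"
    using fps_of_poly_denom_poly_mult_inverse[OF w] by (simp add: L_def I_def)
  then have IJ: "I ^ Suc m = L * J"
    by (simp add: J_def mult_ac)
  have dI: "fps_deriv (I ^ Suc m) = - d * J"
    unfolding I_def d_def J_def by (rule fps_deriv_inverse_denom_power[OF w])
  have dG: "fps_deriv (G * (1 - fps_X)) = - c * G"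
    by (simp only: G_def c_def fps_deriv_fps_binomial_minus_mult)
  have "laplace_reduce w (G * P * I ^ m) = fps_deriv ((G * (1 - fps_X)) * (P * I ^ Suc m))"
    unfolding laplace_reduce_def I_def[symmetric]
    by (rule arg_cong[where f = fps_deriv]) (simp add: mult_ac)
  also have "\<dots> = - c * G * (P * I ^ Suc m)
      + G * (1 - fps_X) * (fps_deriv P * I ^ Suc m + P * (- d * J))"
    by (simp only: fps_deriv_mult[of "G * (1 - fps_X)"] fps_deriv_mult[of P] dG dI add_ac)
  also have "\<dots> = - (G * fps_of_poly (num_step w v m p) * J)"
    unfolding IJ fps_of_poly_num_step P_def[symmetric] L_def[symmetric] c_def[symmetric]
      d_def[symmetric]
    by (simp add: algebra_simps)
  finally show ?thesis by (simp add: G_def P_def J_def)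
qed

lemma laplace_reduce_const_mult: "laplace_reduce w (fps_const c * h) = fps_const c * laplace_reduce w h"
  unfolding laplace_reduce_def mult.assoc by (rule fps_deriv_mult_const_left)

lemma laplace_reduce_funpow_fps_binomial_minus:
  assumes "w \<noteq> 1"
  shows "(laplace_reduce w ^^ k) (fps_binomial_minus v) = fps_const ((-1) ^ k) *
    (fps_binomial_minus v * fps_of_poly (num_poly w v k)
      * inverse (fps_of_poly (denom_poly w)) ^ (2 * k))"
proof (induction k)
  case 0
  then show ?case by simp
next
  case (Suc k)
  then show ?case
    by (simp add: laplace_reduce_const_mult laplace_reduce_fps_binomial_minus_mult[OF assms]
        fps_const_neg[symmetric] del: fps_const_neg)
qed

definition boundary_coeff :: "'a::field_char_0 \<Rightarrow> 'a \<Rightarrow> nat \<Rightarrow> 'a" where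
  "boundary_coeff w v k = poly (num_poly w v k) 0 / (1 - w) ^ (2 * k + 1)"

lemma laplace_coeff_fps_binomial_minus:
  assumes "w \<noteq> 1"
  shows "laplace_coeff w r (fps_binomial_minus v) = (-1) ^ r * boundary_coeff w v r"
proof -
  have "(laplace_reduce w ^^ r) (fps_binomial_minus v) $ 0
      = (-1) ^ r * poly (num_poly w v r) 0 / (1 - w) ^ (2 * r)"
    unfolding laplace_reduce_funpow_fps_binomial_minus[OF assms]
    by (simp add: fps_binomial_minus_def fps_of_poly_denom_poly poly_0_coeff_0 fps_nth_power_0
        power_inverse divide_inverse)
  then show ?thesis
    by (simp add: laplace_coeff_eq_laplace_reduce_funpow[OF assms] boundary_coeff_def mult_ac)
qed

lemma minus_one_power_div_diff_power:
  fixes w :: "'a::field"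
  assumes "m \<le> r"
  shows "(-1) ^ m / (w - 1) ^ (r + k + 1) = - ((-1) ^ k * (-1) ^ (r - m) / (1 - w) ^ (r + k + 1))"
proof -
  obtain q where r: "r = m + q" using le_Suc_ex[OF assms] by blast
  have sign: "a / ((-1) ^ n * y) = a * (-1) ^ n / y" for a y :: 'a and n
    by (cases "even n") simp_all
  have "(w - 1) ^ (r + k + 1) = (-1) ^ (r + k + 1) * (1 - w) ^ (r + k + 1)"
    using power_mult_distrib[of "-1" "1 - w" "r + k + 1"] by simp
  then have "(-1) ^ m / (w - 1) ^ (r + k + 1)
      = (-1) ^ m * (-1) ^ (r + k + 1) / (1 - w) ^ (r + k + 1)"
    by (simp only: sign)
  also have "(-1) ^ m * (-1) ^ (r + k + 1) = ((-1) ^ (2 * m + (q + k + 1)) :: 'a)"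
  proof -
    have "m + (r + k + 1) = 2 * m + (q + k + 1)" using r by simp
    then show ?thesis unfolding power_add[symmetric] by (rule arg_cong)
  qed
  also have "\<dots> = - ((-1) ^ k * (-1) ^ (r - m))"
    by (simp add: r power_add power_mult)
  finally show ?thesis by simp
qed

lemma laplace_coeff_fps_binomial_minus_conv_demoivre:
  "laplace_coeff w r (fps_binomial_minus v) = (\<Sum>k\<le>r. \<Sum>m=0..r. (-1) ^ k * (fact (r + k) / fact k)
     * (demoivre_fps ^ k) $ m * ((-1) ^ (r - m) * (v gchoose (r - m))) / (1 - w) ^ (r + k + 1))"
proof -
  have "(log_tail_fps ^ k * fps_binomial_minus v) $ (r + k)
      = (\<Sum>m=0..r. (demoivre_fps ^ k) $ m * ((-1) ^ (r - m) * (v gchoose (r - m))))" for k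
    by (subst log_tail_fps_power_mult_nth) (simp add: fps_mult_nth fps_binomial_minus_def)
  then show ?thesis
    by (simp add: laplace_coeff_def laplace_term_def sum_distrib_left sum_divide_distrib mult_ac)
qed

lemma U_fun_eq_laplace_coeff:
  assumes "w \<noteq> 1"
  shows "U_fun r w v = (if r = 0 then 1 else 0) + w * laplace_coeff w r (fps_binomial_minus v)"
proof -
  define t where "t m k = w * (-1) ^ k * (fact (r + k) / fact k) * (demoivre_fps ^ k) $ m
      * ((-1) ^ (r - m) * (v gchoose (r - m))) / (1 - w) ^ (r + k + 1)" for m k
  have summand: "(-1) ^ m * (v gchoose (r - m)) * (w / (w - 1) ^ (r + k + 1)
      * (of_nat (fact (r + k)) / of_nat (fact k)) * demoivre (\<lambda>j. 1 / (of_nat j + 1)) m k)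
      = - t m k" if "m \<le> r" for m k
  proof -
    have reorder: "(-1) ^ m * b * (w / Y * F * d) = b * w * F * d * ((-1) ^ m / Y)"
      for b F d Y :: complex
      by (simp add: field_simps)
    show ?thesis
      unfolding reorder minus_one_power_div_diff_power[OF that]
      by (simp add: t_def demoivre_eq_demoivre_fps_power_nth mult_ac)
  qed
  have "U_fun r w v = (if r = 0 then 1 else 0) - (\<Sum>m=0..r. \<Sum>k=0..m. - t m k)"
    unfolding U_fun_def sum_distrib_left
    by (intro arg_cong2[where f = "(-)"] refl sum.cong summand) auto
  then have "U_fun r w v = (if r = 0 then 1 else 0) + (\<Sum>m=0..r. \<Sum>k=0..m. t m k)"
    by (simp add: sum_negf)
  also have "(\<Sum>m=0..r. \<Sum>k=0..m. t m k) = (\<Sum>m=0..r. \<Sum>k\<le>r. t m k)"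
  proof (rule sum.cong)
    fix m assume "m \<in> {0..r}"
    then show "(\<Sum>k=0..m. t m k) = (\<Sum>k\<le>r. t m k)"
      by (intro sum.mono_neutral_left) (auto simp: t_def not_le demoivre_fps_power_nth_eq_0)
  qed simp
  also have "\<dots> = (\<Sum>k\<le>r. \<Sum>m=0..r. t m k)"
    by (rule sum.swap)
  also have "\<dots> = w * laplace_coeff w r (fps_binomial_minus v)"
    by (simp add: laplace_coeff_fps_binomial_minus_conv_demoivre t_def sum_distrib_left mult_ac)
  finally show ?thesis .
qed

section \<open>Integration by parts\<close>

lemma one_minus_mult_of_real_neq_0:
  assumes "Re w \<le> 1" "w \<noteq> 1" "0 \<le> z" "z \<le> 1"
  shows "1 - w * complex_of_real z \<noteq> 0"
proof
  assume "1 - w * complex_of_real z = 0"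
  then have wz: "w * complex_of_real z = 1" by simp
  have re: "Re w * z = 1" using arg_cong[OF wz, of Re] by simp
  have im: "Im w * z = 0" using arg_cong[OF wz, of Im] by simp
  have "Re w * z \<le> z" using assms(1,3) mult_right_mono[of "Re w" 1 z] by simp
  with re assms(4) have "z = 1" by simp
  with re im have "w = 1" by (simp add: complex_eq_iff)
  with assms(2) show False ..
qed

definition laplace_kernel :: "complex \<Rightarrow> complex \<Rightarrow> complex \<Rightarrow> complex \<Rightarrow> complex" where
  "laplace_kernel n w v t = exp (n * w * (1 - t)) * t powr (n + v)"

definition weighted_kernel ::
  "complex \<Rightarrow> complex \<Rightarrow> complex \<Rightarrow> complex poly \<Rightarrow> nat \<Rightarrow> complex \<Rightarrow> complex" where
  "weighted_kernel n w v p m t = laplace_kernel n w v t * (poly p (1 - t) / (1 - w * t) ^ m)"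

lemma norm_laplace_kernel_le:
  assumes "Re w \<le> 1" "0 \<le> n" "0 \<le> n + Re v" "0 \<le> z" "z \<le> 1"
  shows "norm (laplace_kernel (of_real n) w v (of_real z)) \<le> exp \<bar>Re v\<bar>"
proof (cases "z = 0")
  case True
  then show ?thesis by (simp add: laplace_kernel_def)
next
  case False
  with assms have z: "0 < z" by simp
  have "n * Re w * (1 - z) \<le> n * (1 - z)"
    using assms mult_left_mono[of "Re w" 1 n] by (intro mult_right_mono) auto
  moreover have "(n + Re v) * ln z \<le> (n + Re v) * (z - 1)"
    using assms z ln_le_minus_one[OF z] by (intro mult_left_mono) auto
  moreover have "\<bar>Re v * (z - 1)\<bar> \<le> \<bar>Re v\<bar> * 1"
    unfolding abs_mult using assms by (intro mult_left_mono) auto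
  ultimately have "n * Re w * (1 - z) + (n + Re v) * ln z \<le> \<bar>Re v\<bar>"
    by (simp add: algebra_simps)
  then show ?thesis
    using z by (simp add: laplace_kernel_def norm_mult norm_exp_eq_Re norm_powr_real_powr
        powr_def exp_add[symmetric])
qed

lemma poly_denom_poly: "poly (denom_poly w) (1 - t) = 1 - w * t"
  by (simp add: denom_poly_def algebra_simps)

lemma poly_num_step:
  "poly (num_step w v m p) (1 - t) = (v + 1) * poly p (1 - t) * (1 - w * t)
     - t * (poly (pderiv p) (1 - t) * (1 - w * t) - of_nat (Suc m) * w * poly p (1 - t))"
  by (simp add: num_step_def poly_denom_poly) (simp add: algebra_simps)

lemma has_field_derivative_poly_div_power:
  fixes w t :: "'a::real_normed_field"
  assumes D: "1 - w * t \<noteq> 0"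
  shows "((\<lambda>t. poly p (1 - t) / (1 - w * t) ^ Suc m) has_field_derivative
      (of_nat (Suc m) * w * poly p (1 - t) - poly (pderiv p) (1 - t) * (1 - w * t))
        / (1 - w * t) ^ (m + 2)) (at t)"
proof -
  have "((\<lambda>t. 1 - t) has_field_derivative -1) (at t)"
    by (auto intro!: derivative_eq_intros)
  from has_field_derivative_poly[OF this, of p]
  have dP: "((\<lambda>t. poly p (1 - t)) has_field_derivative - poly (pderiv p) (1 - t)) (at t)"
    by simp
  have "((\<lambda>t. 1 - w * t) has_field_derivative - w) (at t)"
    by (auto intro!: derivative_eq_intros)
  from DERIV_power[OF this, of "Suc m"]
  have dD: "((\<lambda>t. (1 - w * t) ^ Suc m) has_field_derivative
      of_nat (Suc m) * (1 - w * t) ^ m * - w) (at t)"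
    by (simp add: mult_ac)
  have "(1 - w * t) ^ Suc m \<noteq> 0" using D by simp
  from DERIV_divide[OF dP dD this]
  have "((\<lambda>t. poly p (1 - t) / (1 - w * t) ^ Suc m) has_field_derivative
      (- poly (pderiv p) (1 - t) * (1 - w * t) ^ Suc m
        - poly p (1 - t) * (of_nat (Suc m) * (1 - w * t) ^ m * - w))
      / ((1 - w * t) ^ Suc m * (1 - w * t) ^ Suc m)) (at t)" .
  moreover obtain y where y: "y = 1 - w * t" "y \<noteq> 0" using D by simp
  then have "(- poly (pderiv p) (1 - t) * (1 - w * t) ^ Suc m
        - poly p (1 - t) * (of_nat (Suc m) * (1 - w * t) ^ m * - w))
        / ((1 - w * t) ^ Suc m * (1 - w * t) ^ Suc m)
      = (of_nat (Suc m) * w * poly p (1 - t) - poly (pderiv p) (1 - t) * (1 - w * t))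
        / (1 - w * t) ^ (m + 2)"
    unfolding y(1)[symmetric] by (simp add: field_simps power_add del: of_nat_Suc)
  ultimately show ?thesis by (rule DERIV_cong)
qed

lemma has_field_derivative_weighted_kernel:
  fixes n w v t :: complex
  assumes t: "t \<notin> \<real>\<^sub>\<le>\<^sub>0" and D: "1 - w * t \<noteq> 0"
  shows "(weighted_kernel n w (v + 1) p (Suc m) has_field_derivative
      n * weighted_kernel n w v p m t + weighted_kernel n w v (num_step w v m p) (m + 2) t) (at t)"
proof -
  define E where "E = exp (n * w * (1 - t))"
  define T where "T = t powr (n + v)"
  define P where "P = poly p (1 - t)"
  define P' where "P' = poly (pderiv p) (1 - t)"
  define D where "D = 1 - w * t"
  have "t \<noteq> 0" using t by auto
  then have Tt: "t powr (n + (v + 1)) = T * t"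
    by (simp add: T_def powr_add add.assoc)
  have dE: "((\<lambda>t. exp (n * w * (1 - t))) has_field_derivative - (n * w) * E) (at t)"
    unfolding E_def by (auto intro!: derivative_eq_intros)
  have dT: "((\<lambda>t. t powr (n + (v + 1))) has_field_derivative (n + (v + 1)) * T) (at t)"
    using has_field_derivative_powr[OF t, of "n + (v + 1)"] by (simp add: T_def)
  have "(weighted_kernel n w (v + 1) p (Suc m) has_field_derivative
      (- (n * w) * E * (T * t) + (n + (v + 1)) * T * E) * (P / D ^ Suc m)
      + (of_nat (Suc m) * w * P - P' * D) / D ^ (m + 2) * (E * (T * t))) (at t)"
    using DERIV_mult[OF DERIV_mult[OF dE dT]
        has_field_derivative_poly_div_power[OF D, where p = p and m = m]]
    unfolding weighted_kernel_def laplace_kernel_def Tt E_def[symmetric] P_def[symmetric]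
      P'_def[symmetric] D_def[symmetric] .
  moreover have "(- (n * w) * E * (T * t) + (n + (v + 1)) * T * E) * (P / D ^ Suc m)
      + (of_nat (Suc m) * w * P - P' * D) / D ^ (m + 2) * (E * (T * t))
      = n * (E * T * (P / D ^ m))
      + E * T * (((v + 1) * P * D - t * (P' * D - of_nat (Suc m) * w * P)) / D ^ (m + 2))"
  proof -
    have "D \<noteq> 0" "w * t = 1 - D" using D by (simp_all add: D_def)
    then show ?thesis
      by (simp add: field_simps power_add) (simp add: D_def algebra_simps)
  qed
  ultimately show ?thesis
    by (simp add: weighted_kernel_def laplace_kernel_def poly_num_step E_def T_def P_def P'_def D_def)
qed

lemma continuous_on_weighted_kernel:
  assumes "Re w \<le> 1" "w \<noteq> 1" "0 < n + Re v"
  shows "continuous_on {0..1} (\<lambda>z. weighted_kernel (of_real n) w v p m (of_real z))"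
  unfolding weighted_kernel_def laplace_kernel_def
  using assms one_minus_mult_of_real_neq_0[OF assms(1,2)]
  by (intro continuous_intros) auto

lemma weighted_kernel_has_integral:
  assumes "Re w \<le> 1" "w \<noteq> 1" "0 < n + Re v"
  shows "((\<lambda>z. of_real n * weighted_kernel (of_real n) w v p m (of_real z)
      + weighted_kernel (of_real n) w v (num_step w v m p) (m + 2) (of_real z))
      has_integral poly p 0 / (1 - w) ^ Suc m) {0..1}"
proof -
  have "((\<lambda>z. of_real n * weighted_kernel (of_real n) w v p m (of_real z)
      + weighted_kernel (of_real n) w v (num_step w v m p) (m + 2) (of_real z))
      has_integral weighted_kernel (of_real n) w (v + 1) p (Suc m) (of_real 1)
        - weighted_kernel (of_real n) w (v + 1) p (Suc m) (of_real 0)) {0..1}"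
  proof (rule fundamental_theorem_of_calculus_interior)
    show "continuous_on {0..1} (\<lambda>z. weighted_kernel (of_real n) w (v + 1) p (Suc m) (of_real z))"
      using assms by (intro continuous_on_weighted_kernel) auto
    fix z :: real assume "z \<in> {0<..<1}"
    then have "of_real z \<notin> \<real>\<^sub>\<le>\<^sub>0" "1 - w * of_real z \<noteq> 0"
      using one_minus_mult_of_real_neq_0[OF assms(1,2)] by (auto simp: complex_nonpos_Reals_iff)
    from has_field_derivative_weighted_kernel[OF this]
    show "((\<lambda>z. weighted_kernel (of_real n) w (v + 1) p (Suc m) (of_real z)) has_vector_derivative
        of_real n * weighted_kernel (of_real n) w v p m (of_real z)
        + weighted_kernel (of_real n) w v (num_step w v m p) (m + 2) (of_real z)) (at z)"
      by (rule has_vector_derivative_real_field)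
  qed simp
  then show ?thesis
    by (simp add: weighted_kernel_def laplace_kernel_def)
qed

definition remainder_integral :: "real \<Rightarrow> complex \<Rightarrow> complex \<Rightarrow> nat \<Rightarrow> complex" where
  "remainder_integral n w v k =
     integral {0..1} (\<lambda>z. weighted_kernel (of_real n) w v (num_poly w v k) (2 * k) (of_real z))"

lemma S_fun_eq_remainder_integral: "S_fun n w v = 1 + of_real n * w * remainder_integral n w v 0"
  by (simp add: S_fun_def remainder_integral_def weighted_kernel_def laplace_kernel_def)

lemma remainder_integral_recurrence:
  assumes "Re w \<le> 1" "w \<noteq> 1" "0 < n + Re v"
  shows "of_real n * remainder_integral n w v k + remainder_integral n w v (Suc k) = boundary_coeff w v k"
proof -
  have int: "(\<lambda>z. weighted_kernel (of_real n) w v (num_poly w v j) (2 * j) (of_real z))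
      integrable_on {0..1}" for j
    using assms by (intro integrable_continuous_interval continuous_on_weighted_kernel)
  have "((\<lambda>z. of_real n * weighted_kernel (of_real n) w v (num_poly w v k) (2 * k) (of_real z)
      + weighted_kernel (of_real n) w v (num_poly w v (Suc k)) (2 * Suc k) (of_real z))
      has_integral of_real n * remainder_integral n w v k + remainder_integral n w v (Suc k)) {0..1}"
    unfolding remainder_integral_def
    by (intro has_integral_add has_integral_mult_right integrable_integral int)
  moreover have "((\<lambda>z. of_real n * weighted_kernel (of_real n) w v (num_poly w v k) (2 * k) (of_real z)
      + weighted_kernel (of_real n) w v (num_poly w v (Suc k)) (2 * Suc k) (of_real z))
      has_integral boundary_coeff w v k) {0..1}"
    using weighted_kernel_has_integral[OF assms, of "num_poly w v k" "2 * k"]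
    by (simp add: boundary_coeff_def)
  ultimately show ?thesis by (rule has_integral_unique)
qed

lemma U_fun_eq_boundary_coeff:
  "w \<noteq> 1 \<Longrightarrow> U_fun r w v = (if r = 0 then 1 else 0) + (-1) ^ r * w * boundary_coeff w v r"
  by (simp add: U_fun_eq_laplace_coeff laplace_coeff_fps_binomial_minus)

lemma remainder_integral_expansion:
  assumes "Re w \<le> 1" "w \<noteq> 1" "0 < n" "0 < n + Re v"
  shows "of_real n * remainder_integral n w v 0
    = (\<Sum>k<N. (-1) ^ k * boundary_coeff w v k / of_real n ^ k)
      + (-1) ^ N * (of_real n * remainder_integral n w v N) / of_real n ^ N"
proof (induction N)
  case 0
  then show ?case by simp
next
  case (Suc N)
  have "of_real n * remainder_integral n w v N
      = boundary_coeff w v N - remainder_integral n w v (Suc N)"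
    using remainder_integral_recurrence[OF assms(1,2,4)] by (simp add: algebra_simps)
  then have "(-1) ^ N * (of_real n * remainder_integral n w v N) / of_real n ^ N
      = (-1) ^ N * (boundary_coeff w v N - remainder_integral n w v (Suc N)) / of_real n ^ N"
    by (simp only:)
  also have "\<dots> = (-1) ^ N * boundary_coeff w v N / of_real n ^ N
      + (-1) ^ Suc N * (of_real n * remainder_integral n w v (Suc N)) / of_real n ^ Suc N"
    using assms(3) by (simp add: field_simps)
  finally have "(-1) ^ N * (of_real n * remainder_integral n w v N) / of_real n ^ N
      = (-1) ^ N * boundary_coeff w v N / of_real n ^ N
        + (-1) ^ Suc N * (of_real n * remainder_integral n w v (Suc N)) / of_real n ^ Suc N" .
  with Suc show ?case by simp
qed

lemma S_fun_minus_partial_sum: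
  assumes "Re w \<le> 1" "w \<noteq> 1" "0 < n" "0 < n + Re v" "1 \<le> R"
  shows "S_fun n w v - (\<Sum>r<R. U_fun r w v / of_real n ^ r)
    = (-1) ^ R * w * (of_real n * remainder_integral n w v R) / of_real n ^ R"
proof -
  have "(\<Sum>r<R. (if r = 0 then 1 else 0) / (of_real n ^ r :: complex)) = 1"
    using assms(5) by (simp add: sum.delta' if_distrib[of "\<lambda>x. x / _"] cong: if_cong)
  then have "(\<Sum>r<R. U_fun r w v / of_real n ^ r)
      = 1 + w * (\<Sum>r<R. (-1) ^ r * boundary_coeff w v r / of_real n ^ r)"
    by (simp add: U_fun_eq_boundary_coeff[OF assms(2)] add_divide_distrib sum.distrib
        sum_distrib_left mult_ac)
  then show ?thesis
    unfolding S_fun_eq_remainder_integral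
    using remainder_integral_expansion[OF assms(1-4), of R] by (simp add: algebra_simps)
qed

lemma remainder_integral_bigo:
  assumes "Re w \<le> 1" "w \<noteq> 1"
  shows "(\<lambda>n. remainder_integral n w v k) \<in> O[at_top](\<lambda>_. 1)"
proof -
  define q where "q z = poly (num_poly w v k) (1 - of_real z) / (1 - w * of_real z) ^ (2 * k)" for z
  have "continuous_on {0..1} q"
    unfolding q_def using one_minus_mult_of_real_neq_0[OF assms]
    by (intro continuous_intros) auto
  then obtain C where C: "0 < C" "\<And>z. z \<in> {0..1} \<Longrightarrow> norm (q z) \<le> C"
    using compact_continuous_image[of "{0..1}" q] compact_imp_bounded bounded_pos
    by (metis compact_Icc image_eqI)
  show ?thesis
  proof (rule bigoI)
    show "\<forall>\<^sub>F n in at_top. norm (remainder_integral n w v k) \<le> exp \<bar>Re v\<bar> * C * norm (1::complex)"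
      using eventually_gt_at_top[of "\<bar>Re v\<bar>"]
    proof eventually_elim
      case (elim n)
      have "norm (remainder_integral n w v k) \<le> exp \<bar>Re v\<bar> * C * measure lborel (cbox 0 (1::real))"
      proof (rule has_integral_bound)
        show "0 \<le> exp \<bar>Re v\<bar> * C" using C by simp
        show "((\<lambda>z. weighted_kernel (of_real n) w v (num_poly w v k) (2 * k) (of_real z))
            has_integral remainder_integral n w v k) (cbox 0 1)"
          unfolding remainder_integral_def cbox_interval using assms elim
          by (intro integrable_integral integrable_continuous_interval continuous_on_weighted_kernel) auto
        fix z :: real assume "z \<in> cbox 0 1"
        then show "norm (weighted_kernel (of_real n) w v (num_poly w v k) (2 * k) (of_real z))
            \<le> exp \<bar>Re v\<bar> * C"
          using assms elim unfolding weighted_kernel_def norm_mult q_def[symmetric]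
          by (intro mult_mono norm_laplace_kernel_le C(2)) auto
      qed
      then show ?case by simp
    qed
  qed
qed

lemma of_real_mult_remainder_integral_bigo:
  assumes "Re w \<le> 1" "w \<noteq> 1"
  shows "(\<lambda>n. of_real n * remainder_integral n w v k) \<in> O[at_top](\<lambda>_. 1)"
proof -
  have "(\<lambda>n. boundary_coeff w v k - remainder_integral n w v (Suc k)) \<in> O[at_top](\<lambda>_. 1)"
    using remainder_integral_bigo[OF assms] by (intro sum_in_bigo) simp_all
  moreover have "\<forall>\<^sub>F n in at_top. boundary_coeff w v k - remainder_integral n w v (Suc k)
      = of_real n * remainder_integral n w v k"
    using eventually_gt_at_top[of "\<bar>Re v\<bar>"]
  proof eventually_elim
    case (elim n)
    then have "0 < n + Re v" by arith
    from remainder_integral_recurrence[OF assms this] show ?case by (simp add: algebra_simps)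
  qed
  ultimately show ?thesis by (simp add: landau_o.big.in_cong)
qed

theorem proposition5p1:
  fixes w v :: complex and R :: nat
  assumes "Re w \<le> 1" and "w \<noteq> 1" and "R \<ge> 1"
  shows "(\<lambda>n::real. S_fun n w v - (\<Sum>r<R. U_fun r w v / (of_real n) ^ r))
           \<in> O[at_top](\<lambda>n::real. 1 / (of_real n) ^ R)"
proof -
  have "(\<lambda>n. (-1) ^ R * w * (of_real n * remainder_integral n w v R) * (1 / of_real n ^ R))
      \<in> O[at_top](\<lambda>n::real. 1 * (1 / of_real n ^ R))"
    using of_real_mult_remainder_integral_bigo[OF assms(1,2)]
    by (intro landau_o.big.mult_right) simp
  moreover have "\<forall>\<^sub>F n in at_top.
      (-1) ^ R * w * (of_real n * remainder_integral n w v R) * (1 / of_real n ^ R)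
      = S_fun n w v - (\<Sum>r<R. U_fun r w v / of_real n ^ r)"
    using eventually_gt_at_top[of "\<bar>Re v\<bar>"]
  proof eventually_elim
    case (elim n)
    then have "0 < n" "0 < n + Re v" by arith+
    with assms show ?case by (simp add: S_fun_minus_partial_sum)
  qed
  ultimately show ?thesis
    by (simp add: landau_o.big.in_cong)
qed

end
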